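(* Assume $Q$ is connected. Each of the following conditions implies $L_{-1}=0$: (i) $Q$ has no loop; (ii) for every loop $a$ of $Q$ (arrow with $s(a)=t(a)$), the characteristic of $k$ does not divide the integer $m\ge2$ such that $a^m\in Z$ and $a^{m-1}\in B$; (iii) $k$ has characteristic $0$; (iv) $Z=Q_m$ for some $m\ge2$ (so $\Lambda=kQ/\langle Q_m\rangle$ is a truncated quiver algebra) and $Q$ is not the quiver with one vertex and one loop; (v) $Q$ is the quiver with one vertex and one loop, $Z=Q_m$ and the characteristic of $k$ does not divide $m\ge2$.
   Context: Let $k$ be an algebraically closed field and $Q$ a finite quiver; $Q_n$ is the set of paths of length $n$ ($Q_0$ vertices, $Q_1$ arrows), $s,t$ source and terminus. Let $Z$ be a minimal set of paths of length $\ge2$ (no proper subpath of an element of $Z$ lies in $Z$) with $\Lambda=kQ/\langle Z\rangle$ finite dimensional. $B$ is the set of paths (vertices included) not containing an element of $Z$ as a subpath. Paths are parallel if they have the same source and terminus; $Q_1//Q_0$ is the set of pairs $(a,e)$ with $a$ a loop at the vertex $e$, and $k(X//Y)$ is the vector space with basis the pairs of parallel paths in $X\times Y$. For a path $\varepsilon$ and a pair $(a,\gamma)$ of parallel paths with $a\in Q_1$, $\gamma\in B$, $\varepsilon^{(a,\gamma)}$ is the sum of all paths in $B$ obtained by replacing one occurrence of $a$ in $\varepsilon$ by $\gamma$ ($0$ if none), and $(\eta,\varepsilon^{(a,\gamma)})=\sum_i(\eta,\varepsilon_i)$ if $\varepsilon^{(a,\gamma)}=\sum_i\varepsilon_i$.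 $\psi_1:k(Q_1//B)\to k(Z//B)$ is $(a,\gamma)\mapsto\sum_{p\in Z}(p,p^{(a,\gamma)})$, and $L_{-1}:=k(Q_1//Q_0)\cap\operatorname{Ker}\psi_1$ (the degree $-1$ component of $\operatorname{H}^1(\Lambda,\Lambda)$). *)

theory Defs
  imports "HOL-Computational_Algebra.Polynomial" "HOL-Library.Sublist"
begin

text \<open>Paths of length 0 (vertices) are handled separately: the set of all paths is encoded in the
 sum type  'v + 'a list, with Inl e the trivial path at e and Inr p a path of positive length.\<close>

definition alg_closed :: "'k::field itself \<Rightarrow> bool" where
  "alg_closed _ \<longleftrightarrow> (\<forall>p :: 'k poly. degree p \<ge> 1 \<longrightarrow> (\<exists>x. poly p x = 0))"

definition quiver :: "'v set \<Rightarrow> 'a set \<Rightarrow> ('a \<Rightarrow> 'v) \<Rightarrow> ('a \<Rightarrow> 'v) \<Rightarrow> bool" where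
  "quiver V A s t \<longleftrightarrow> finite V \<and> finite A \<and> s ` A \<subseteq> V \<and> t ` A \<subseteq> V"

definition connected_quiver :: "'v set \<Rightarrow> 'a set \<Rightarrow> ('a \<Rightarrow> 'v) \<Rightarrow> ('a \<Rightarrow> 'v) \<Rightarrow> bool" where
  "connected_quiver V A s t \<longleftrightarrow> V \<noteq> {} \<and>
     (\<forall>u\<in>V. \<forall>v\<in>V. (u, v) \<in> ({(s a, t a) | a. a \<in> A} \<union> {(t a, s a) | a. a \<in> A})\<^sup>*)"

definition qpath :: "'a set \<Rightarrow> ('a \<Rightarrow> 'v) \<Rightarrow> ('a \<Rightarrow> 'v) \<Rightarrow> 'a list \<Rightarrow> bool" where
  "qpath A s t p \<longleftrightarrow> p \<noteq> [] \<and> set p \<subseteq> A \<and>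
     (\<forall>i. Suc i < length p \<longrightarrow> t (p ! i) = s (p ! Suc i))"

definition paths_of_length :: "'a set \<Rightarrow> ('a \<Rightarrow> 'v) \<Rightarrow> ('a \<Rightarrow> 'v) \<Rightarrow> nat \<Rightarrow> 'a list set" where
  "paths_of_length A s t n = {p. qpath A s t p \<and> length p = n}"

definition is_loop :: "'a set \<Rightarrow> ('a \<Rightarrow> 'v) \<Rightarrow> ('a \<Rightarrow> 'v) \<Rightarrow> 'a \<Rightarrow> bool" where
  "is_loop A s t a \<longleftrightarrow> a \<in> A \<and> s a = t a"

definition minimal_relations :: "'a set \<Rightarrow> ('a \<Rightarrow> 'v) \<Rightarrow> ('a \<Rightarrow> 'v) \<Rightarrow> 'a list set \<Rightarrow> bool" where
  "minimal_relations A s t Z \<longleftrightarrow>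
     (\<forall>p\<in>Z. qpath A s t p \<and> length p \<ge> 2) \<and>
     (\<forall>p\<in>Z. \<forall>q\<in>Z. \<not> strict_sublist q p)"

definition Bset :: "'v set \<Rightarrow> 'a set \<Rightarrow> ('a \<Rightarrow> 'v) \<Rightarrow> ('a \<Rightarrow> 'v) \<Rightarrow> 'a list set \<Rightarrow> ('v + 'a list) set" where
  "Bset V A s t Z = Inl ` V \<union> Inr ` {p. qpath A s t p \<and> (\<forall>z\<in>Z. \<not> sublist z p)}"

definition replace_at :: "'a list \<Rightarrow> nat \<Rightarrow> ('v + 'a list) \<Rightarrow> ('v + 'a list)" where
  "replace_at p i \<gamma> = (case \<gamma> of
       Inl e \<Rightarrow> (if length p = 1 then Inl e else Inr (take i p @ drop (Suc i) p))
     | Inr q \<Rightarrow> Inr (take i p @ q @ drop (Suc i) p))"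

text \<open>(eta, p^(a,gamma)): the multiplicity of eta in p^(a,gamma).\<close>
definition occ_coeff :: "('v + 'a list) set \<Rightarrow> 'a list \<Rightarrow> 'a \<Rightarrow> ('v + 'a list) \<Rightarrow> ('v + 'a list) \<Rightarrow> nat" where
  "occ_coeff B p a \<gamma> \<eta> =
     card {i. i < length p \<and> p ! i = a \<and> replace_at p i \<gamma> = \<eta> \<and> \<eta> \<in> B}"

definition loop_pairs :: "'v set \<Rightarrow> 'a set \<Rightarrow> ('a \<Rightarrow> 'v) \<Rightarrow> ('a \<Rightarrow> 'v) \<Rightarrow> ('a \<times> 'v) set" where
  "loop_pairs V A s t = {(a, e). a \<in> A \<and> e \<in> V \<and> s a = e \<and> t a = e}"

text \<open>k(Q_1//Q_0): functions supported on loop_pairs (coordinates w.r.t. the basis).\<close>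
definition kQ1Q0 :: "'v set \<Rightarrow> 'a set \<Rightarrow> ('a \<Rightarrow> 'v) \<Rightarrow> ('a \<Rightarrow> 'v) \<Rightarrow> ('a \<times> 'v \<Rightarrow> 'k::field) set" where
  "kQ1Q0 V A s t = {x. \<forall>y. y \<notin> loop_pairs V A s t \<longrightarrow> x y = 0}"

text \<open>psi_1 restricted to k(Q_1//Q_0), with values in k(Z//B) given as coordinate functions on
 Z \<times> B (coordinates at non-basis pairs are 0). Pairs (p, eta) with p in Z and eta in B
 that are not parallel automatically get coefficient 0.\<close>
definition psi1 :: "'v set \<Rightarrow> 'a set \<Rightarrow> ('a \<Rightarrow> 'v) \<Rightarrow> ('a \<Rightarrow> 'v) \<Rightarrow> 'a list set \<Rightarrow>
     ('a \<times> 'v \<Rightarrow> 'k::field) \<Rightarrow> ('a list \<times> ('v + 'a list) \<Rightarrow> 'k)" where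
  "psi1 V A s t Z x = (\<lambda>(p, \<eta>). if p \<in> Z \<and> \<eta> \<in> Bset V A s t Z then
      (\<Sum>(a, e)\<in>loop_pairs V A s t. x (a, e) * of_nat (occ_coeff (Bset V A s t Z) p a (Inl e) \<eta>))
      else 0)"

definition L_minus1 :: "'v set \<Rightarrow> 'a set \<Rightarrow> ('a \<Rightarrow> 'v) \<Rightarrow> ('a \<Rightarrow> 'v) \<Rightarrow> 'a list set \<Rightarrow>
     ('a \<times> 'v \<Rightarrow> 'k::field) set" where
  "L_minus1 V A s t Z = {x \<in> kQ1Q0 V A s t. \<forall>y. psi1 V A s t Z x y = 0}"

end

theory Submission
  imports Defs
begin

text \<open>For a loop a at the vertex e, the basis vector (a, e) of k(Q_1//Q_0) acts on a path by deleting
  one occurrence of a. Deleting an a from a maximal block a^(n+1) of a relation p (with a not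
  occurring elsewhere in p) always yields the same path, so the coefficient of psi_1(x) at that
  pair is (n + 1) x(a, e); other loops cannot reach it, since they do not change the number of
  occurrences of a. Since B is finite, some power of a lies outside B, hence contains a relation,
  and by minimality of Z there is an m \<ge> 2 with a^m \<in> Z and a^(m-1) \<in> B; thus m x(a, e) = 0.
  This settles (ii), and (i), (iii), (v) are special cases of (ii). In case (iv) connectedness
  provides a second arrow b at e; the relation a^(m-1) b (or b a^(m-1)) of Q_m then gives
  (m - 1) x(a, e) = 0, which together with m x(a, e) = 0 forces x(a, e) = 0 in any characteristic.\<close>

lemma count_list_delete_nth:
  assumes "i < length p" "p ! i \<noteq> a"
  shows "count_list (take i p @ drop (Suc i) p) a = count_list p a"
proof -
  have "p = take i p @ p ! i # drop (Suc i) p"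
    using assms(1) by (rule id_take_nth_drop)
  then have "count_list p a = count_list (take i p) a + count_list (drop (Suc i) p) a"
    using assms(2) by (metis count_list.simps(2) count_list_append)
  then show ?thesis by simp
qed

lemma occ_coeff_eq_0_if_count_list_differs:
  assumes "c \<noteq> a" "count_list q a \<noteq> count_list p a"
  shows "occ_coeff B p c (Inl e) (Inr q) = 0"
proof -
  have "replace_at p i (Inl e) \<noteq> Inr q" if "i < length p" "p ! i = c" for i
    using that assms count_list_delete_nth[of i p a] by (auto simp: replace_at_def)
  then show ?thesis unfolding occ_coeff_def by auto
qed

lemma delete_nth_in_block:
  assumes "j \<le> n"
  shows "take (length u + j) (u @ replicate (Suc n) a @ w)
      @ drop (Suc (length u + j)) (u @ replicate (Suc n) a @ w) = u @ replicate n a @ w"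
proof -
  have "replicate j a @ replicate (n - j) a = replicate n a"
    using assms by (simp add: replicate_add[symmetric])
  then show ?thesis
    using assms by (simp add: min_def del: replicate_Suc)
qed

lemma occ_coeff_loop_block:
  assumes "a \<notin> set u" "a \<notin> set w" "u @ replicate n a @ w \<noteq> []"
    and "Inr (u @ replicate n a @ w) \<in> B"
  shows "occ_coeff B (u @ replicate (Suc n) a @ w) a (Inl e) (Inr (u @ replicate n a @ w)) = Suc n"
proof -
  let ?p = "u @ replicate (Suc n) a @ w"
  have "i < length ?p \<and> ?p ! i = a \<longleftrightarrow> i \<in> {length u..length u + n}" for i
  proof
    assume i: "i < length ?p \<and> ?p ! i = a"
    have "\<not> i < length u"
      using i assms(1) by (metis nth_append nth_mem)
    moreover have "\<not> length u + n < i"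
    proof
      assume "length u + n < i"
      then obtain k where k: "i = length u + Suc n + k" by (metis less_iff_Suc_add add_Suc_right add_Suc)
      then have "?p ! i = w ! k" "k < length w"
        using i by (simp_all add: nth_append del: replicate_Suc)
      then show False using i assms(2) by (metis nth_mem)
    qed
    ultimately show "i \<in> {length u..length u + n}" by simp
  next
    assume "i \<in> {length u..length u + n}"
    then show "i < length ?p \<and> ?p ! i = a"
      by (auto simp: nth_append simp del: replicate_Suc)
  qed
  moreover have "replace_at ?p i (Inl e) = Inr (u @ replicate n a @ w)"
    if i: "i \<in> {length u..length u + n}" for i
  proof -
    obtain j where "i = length u + j" "j \<le> n"
      using i by (intro that[of "i - length u"]) auto
    then show ?thesis
      using delete_nth_in_block[of j n u a w] assms(3) by (simp add: replace_at_def del: replicate_Suc)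
  qed
  ultimately have "{i. i < length ?p \<and> ?p ! i = a \<and> replace_at ?p i (Inl e) = Inr (u @ replicate n a @ w)
      \<and> Inr (u @ replicate n a @ w) \<in> B} = {length u..length u + n}"
    using assms(4) by blast
  then show ?thesis unfolding occ_coeff_def by simp
qed

lemma finite_loop_pairs:
  assumes "quiver V A s t"
  shows "finite (loop_pairs V A s t)"
proof (rule finite_subset)
  show "loop_pairs V A s t \<subseteq> A \<times> V" unfolding loop_pairs_def by auto
  show "finite (A \<times> V)" using assms unfolding quiver_def by auto
qed

lemma psi1_eq_single_loop_term:
  assumes q: "quiver V A s t" and "p \<in> Z" "\<eta> \<in> Bset V A s t Z" and a: "a \<in> A" "s a = t a"
    and other: "\<And>c. c \<in> A \<Longrightarrow> s c = t c \<Longrightarrow> c \<noteq> a \<Longrightarrow>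
               occ_coeff (Bset V A s t Z) p c (Inl (s c)) \<eta> = 0"
  shows "psi1 V A s t Z x (p, \<eta>) = x (a, s a) * of_nat (occ_coeff (Bset V A s t Z) p a (Inl (s a)) \<eta>)"
proof -
  let ?L = "loop_pairs V A s t"
  let ?f = "\<lambda>(c, e). x (c, e) * of_nat (occ_coeff (Bset V A s t Z) p c (Inl e) \<eta>)"
  have mem: "(a, s a) \<in> ?L" using a q unfolding loop_pairs_def quiver_def by auto
  have "sum ?f (?L - {(a, s a)}) = 0"
  proof (rule sum.neutral, rule ballI)
    fix y assume y: "y \<in> ?L - {(a, s a)}"
    obtain c e where "y = (c, e)" by (cases y)
    with y have "y = (c, s c)" "c \<in> A" "s c = t c" "c \<noteq> a"
      unfolding loop_pairs_def by auto
    then show "?f y = 0" using other by simp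
  qed
  moreover have "psi1 V A s t Z x (p, \<eta>) = ?f (a, s a) + sum ?f (?L - {(a, s a)})"
    using assms(2,3) sum.remove[OF finite_loop_pairs[OF q] mem, of ?f] by (simp add: psi1_def)
  ultimately show ?thesis by simp
qed

lemma psi1_loop_block:
  assumes "quiver V A s t" and a: "a \<in> A" "s a = t a"
    and "u @ replicate (Suc n) a @ w \<in> Z" "Inr (u @ replicate n a @ w) \<in> Bset V A s t Z"
    and block: "a \<notin> set u" "a \<notin> set w" "u @ replicate n a @ w \<noteq> []"
  shows "psi1 V A s t Z x (u @ replicate (Suc n) a @ w, Inr (u @ replicate n a @ w))
    = of_nat (Suc n) * x (a, s a)"
proof -
  have "count_list (u @ replicate n a @ w) a \<noteq> count_list (u @ replicate (Suc n) a @ w) a"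
    using block by (simp add: count_list_0_iff)
  then have "psi1 V A s t Z x (u @ replicate (Suc n) a @ w, Inr (u @ replicate n a @ w))
    = x (a, s a) * of_nat (occ_coeff (Bset V A s t Z) (u @ replicate (Suc n) a @ w) a (Inl (s a))
        (Inr (u @ replicate n a @ w)))"
    using assms by (intro psi1_eq_single_loop_term occ_coeff_eq_0_if_count_list_differs)
  also have "\<dots> = of_nat (Suc n) * x (a, s a)"
    using occ_coeff_loop_block[OF block assms(5)] by (simp only: mult.commute)
  finally show ?thesis .
qed

lemma L_minus1_loop_block:
  assumes "x \<in> L_minus1 V A s t Z" "quiver V A s t" "a \<in> A" "s a = t a"
    and "u @ replicate (Suc n) a @ w \<in> Z" "Inr (u @ replicate n a @ w) \<in> Bset V A s t Z"
    and "a \<notin> set u" "a \<notin> set w" "u @ replicate n a @ w \<noteq> []"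
  shows "of_nat (Suc n) * x (a, s a) = 0"
  using assms psi1_loop_block[of V A s t a u n w Z x] unfolding L_minus1_def by auto

lemma L_minus1_loop_power:
  assumes "x \<in> L_minus1 V A s t Z" "quiver V A s t" "a \<in> A" "s a = t a" "m \<ge> 2"
    and "replicate m a \<in> Z" "Inr (replicate (m - 1) a) \<in> Bset V A s t Z"
  shows "of_nat m * x (a, s a) = 0"
proof -
  obtain n where "m = Suc (Suc n)" using \<open>m \<ge> 2\<close> by (metis add_2_eq_Suc le_Suc_ex)
  then show ?thesis
    using L_minus1_loop_block[of x V A s t Z a "[]" "Suc n" "[]"] assms by (simp del: replicate_Suc)
qed

lemma qpath_replicate_loop:
  assumes "a \<in> A" "s a = t a" "n \<noteq> 0"
  shows "qpath A s t (replicate n a)"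
  using assms unfolding qpath_def by auto

lemma sublist_replicate_eq_replicate:
  assumes "sublist z (replicate k a)"
  shows "z = replicate (length z) a"
  using set_mono_sublist[OF assms] by (intro replicate_eqI) auto

lemma exists_minimal_loop_power_relation:
  assumes mr: "minimal_relations A s t Z" and fin: "finite (Bset V A s t Z)"
    and a: "a \<in> A" "s a = t a"
  shows "\<exists>m\<ge>2. replicate m a \<in> Z \<and> Inr (replicate (m - 1) a) \<in> Bset V A s t Z"
proof -
  have "infinite (range (\<lambda>k. Inr (replicate (Suc k) a) :: 'v + 'a list))"
    by (rule range_inj_infinite) (simp add: inj_def)
  then have "\<not> range (\<lambda>k. Inr (replicate (Suc k) a)) \<subseteq> Bset V A s t Z"
    using fin finite_subset by blast
  then obtain k where "Inr (replicate (Suc k) a) \<notin> Bset V A s t Z" by auto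
  then obtain z where z: "z \<in> Z" "sublist z (replicate (Suc k) a)"
    using qpath_replicate_loop[of a A s t] a unfolding Bset_def by blast
  define m where "m = length z"
  have zm: "z = replicate m a"
    unfolding m_def using z(2) by (rule sublist_replicate_eq_replicate)
  have m: "m \<ge> 2" using mr z(1) unfolding minimal_relations_def m_def by auto
  have "\<not> sublist z' (replicate (m - 1) a)" if "z' \<in> Z" for z'
  proof
    assume sub: "sublist z' (replicate (m - 1) a)"
    have "z = a # replicate (m - 1) a"
      using m zm by (cases m) auto
    then have "sublist (replicate (m - 1) a) z"
      by (simp add: sublist_Cons_right)
    then have "strict_sublist z' z"
      using sub sublist_length_le[OF sub] m zm unfolding strict_sublist_def
      by (auto intro: sublist_order.order.trans)
    then show False using mr that z(1) unfolding minimal_relations_def by blast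
  qed
  then have "Inr (replicate (m - 1) a) \<in> Bset V A s t Z"
    using qpath_replicate_loop[of a A s t "m - 1"] a m unfolding Bset_def by auto
  then show ?thesis using m z(1) zm by blast
qed

lemma qpath_replicate_loop_snoc:
  assumes "a \<in> A" "s a = t a" "b \<in> A" "s b = s a"
  shows "qpath A s t (replicate n a @ [b])"
  using assms unfolding qpath_def by (auto simp: nth_append)

lemma qpath_Cons_replicate_loop:
  assumes "a \<in> A" "s a = t a" "b \<in> A" "t b = s a"
  shows "qpath A s t (b # replicate n a)"
  using assms unfolding qpath_def by (auto simp: nth_Cons split: nat.splits)

lemma Inr_in_Bset_if_shorter:
  assumes "Z = paths_of_length A s t m" "qpath A s t q" "length q < m"
  shows "Inr q \<in> Bset V A s t Z"
proof -
  have "length z = m" if "z \<in> Z" for z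
    using that assms(1) unfolding paths_of_length_def by simp
  then have "\<forall>z\<in>Z. \<not> sublist z q"
    using assms(3) sublist_length_le by fastforce
  then show ?thesis using assms(2) unfolding Bset_def by blast
qed

lemma rtrancl_first_step_away:
  assumes "(u, v) \<in> R\<^sup>*" "u \<noteq> v"
  shows "\<exists>w. (u, w) \<in> R \<and> w \<noteq> u"
  using assms
proof (induction rule: rtrancl_induct)
  case (step y z)
  then show ?case by (cases "y = u") auto
qed simp

lemma exists_other_arrow_at_loop_vertex:
  assumes q: "quiver V A s t" and c: "connected_quiver V A s t" and a: "a \<in> A" "s a = t a"
    and nt: "\<not> (card V = 1 \<and> card A = 1 \<and> (\<forall>c\<in>A. is_loop A s t c))"
  shows "\<exists>b\<in>A. b \<noteq> a \<and> (s b = s a \<or> t b = s a)"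
proof (cases "V = {s a}")
  case True
  then have "\<forall>c\<in>A. is_loop A s t c" and "card V = 1"
    using q unfolding quiver_def is_loop_def by (auto simp: image_subset_iff)
  then have "A \<noteq> {a}" using nt by auto
  then obtain b where "b \<in> A" "b \<noteq> a" using a by blast
  moreover have "s b = s a" using q True \<open>b \<in> A\<close> unfolding quiver_def by auto
  ultimately show ?thesis by blast
next
  case False
  have "s a \<in> V" using q a unfolding quiver_def by auto
  with False obtain v where v: "v \<in> V" "v \<noteq> s a" by blast
  let ?E = "{(s b, t b) | b. b \<in> A} \<union> {(t b, s b) | b. b \<in> A}"
  have "(s a, v) \<in> ?E\<^sup>*"
    using c v \<open>s a \<in> V\<close> unfolding connected_quiver_def by blast
  from rtrancl_first_step_away[OF this] v(2) obtain w where w: "(s a, w) \<in> ?E" "w \<noteq> s a"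
    by auto
  then obtain b where b: "b \<in> A" "s b = s a \<and> t b = w \<or> t b = s a \<and> s b = w"
    by auto
  have "b \<noteq> a" using b(2) w(2) a(2) by auto
  then show ?thesis using b by auto
qed

lemma truncated_loop_coordinate_vanishes:
  fixes x :: "'a \<times> 'v \<Rightarrow> 'k::field"
  assumes x: "x \<in> L_minus1 V A s t Z" and q: "quiver V A s t"
    and Z: "Z = paths_of_length A s t m" and m: "m \<ge> 2"
    and a: "a \<in> A" "s a = t a" and b: "b \<in> A" "b \<noteq> a" "s b = s a \<or> t b = s a"
  shows "x (a, s a) = 0"
proof -
  obtain n where n: "m = Suc (Suc n)" using m by (metis add_2_eq_Suc le_Suc_ex)
  have in_Z: "p \<in> Z" if "qpath A s t p" "length p = m" for p
    using that unfolding Z paths_of_length_def by simp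
  have in_B: "Inr p \<in> Bset V A s t Z" if "qpath A s t p" "length p < m" for p
    using Z that by (rule Inr_in_Bset_if_shorter)
  have m_x: "of_nat m * x (a, s a) = 0"
    using qpath_replicate_loop[of a A s t] a m
    by (intro L_minus1_loop_power[OF x q a m] in_Z in_B) auto
  have Suc_n_x: "of_nat (Suc n) * x (a, s a) = 0"
    using b(3)
  proof
    assume "s b = s a"
    have "qpath A s t (replicate k a @ [b])" for k
      using a b(1) \<open>s b = s a\<close> by (rule qpath_replicate_loop_snoc[of a A s t b])
    then show ?thesis
      using n b(2) by (intro L_minus1_loop_block[OF x q a, of "[]" n "[b]"] in_Z in_B)
        (simp_all del: replicate_Suc)
  next
    assume "t b = s a"
    have "qpath A s t (b # replicate k a)" for k
      using a b(1) \<open>t b = s a\<close> by (rule qpath_Cons_replicate_loop[of a A s t b])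
    then show ?thesis
      using n b(2) by (intro L_minus1_loop_block[OF x q a, of "[b]" n "[]"] in_Z in_B)
        (simp_all del: replicate_Suc)
  qed
  have "x (a, s a) = of_nat m * x (a, s a) - of_nat (Suc n) * x (a, s a)"
    using n by (simp add: algebra_simps)
  also have "\<dots> = 0" by (simp only: m_x Suc_n_x diff_self)
  finally show ?thesis .
qed

lemma L_minus1_eq_zero_if_loop_coordinates_vanish:
  fixes V :: "'v set" and A :: "'a set"
  assumes "\<And>x a. x \<in> L_minus1 V A s t Z \<Longrightarrow> a \<in> A \<Longrightarrow> s a = t a \<Longrightarrow> x (a, s a) = (0 :: 'k::field)"
  shows "L_minus1 V A s t Z = {(\<lambda>_. 0 :: 'k)}"
proof (intro equalityI subsetI)
  fix x :: "'a \<times> 'v \<Rightarrow> 'k" assume x: "x \<in> L_minus1 V A s t Z"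
  have "x (c, e) = 0" for c e
  proof (cases "(c, e) \<in> loop_pairs V A s t")
    case True
    then show ?thesis using assms[OF x, of c] unfolding loop_pairs_def by auto
  next
    case False
    then show ?thesis using x unfolding L_minus1_def kQ1Q0_def by auto
  qed
  then show "x \<in> {\<lambda>_. 0}" by auto
qed (auto simp: L_minus1_def kQ1Q0_def psi1_def)

lemma L_minus1_trivial_if_char_not_dvd_loop_relations:
  fixes V :: "'v set" and A :: "'a set"
  assumes "quiver V A s t" "minimal_relations A s t Z" "finite (Bset V A s t Z)"
    and char: "\<And>a m. is_loop A s t a \<Longrightarrow> m \<ge> 2 \<Longrightarrow> replicate m a \<in> Z
      \<Longrightarrow> Inr (replicate (m - 1) a) \<in> Bset V A s t Z \<Longrightarrow> \<not> CHAR('k) dvd m"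
  shows "L_minus1 V A s t Z = {(\<lambda>_. 0 :: 'k::field)}"
proof (rule L_minus1_eq_zero_if_loop_coordinates_vanish)
  fix x :: "'a \<times> 'v \<Rightarrow> 'k" and a
  assume x: "x \<in> L_minus1 V A s t Z" and a: "a \<in> A" "s a = t a"
  obtain m where m: "m \<ge> 2" "replicate m a \<in> Z" "Inr (replicate (m - 1) a) \<in> Bset V A s t Z"
    using exists_minimal_loop_power_relation[OF assms(2,3) a] by blast
  have "of_nat m * x (a, s a) = 0"
    using L_minus1_loop_power[OF x assms(1) a m] .
  moreover have "of_nat m \<noteq> (0 :: 'k)"
    using char[of a m] a m by (simp add: is_loop_def of_nat_eq_0_iff_char_dvd)
  ultimately show "x (a, s a) = 0" by simp
qed

lemma L_minus1_trivial_truncated: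
  fixes V :: "'v set" and A :: "'a set"
  assumes "quiver V A s t" "connected_quiver V A s t" "m \<ge> 2" "Z = paths_of_length A s t m"
    and "\<not> (card V = 1 \<and> card A = 1 \<and> (\<forall>a\<in>A. is_loop A s t a))"
  shows "L_minus1 V A s t Z = {(\<lambda>_. 0 :: 'k::field)}"
proof (rule L_minus1_eq_zero_if_loop_coordinates_vanish)
  fix x :: "'a \<times> 'v \<Rightarrow> 'k" and a
  assume x: "x \<in> L_minus1 V A s t Z" and a: "a \<in> A" "s a = t a"
  obtain b where "b \<in> A" "b \<noteq> a" "s b = s a \<or> t b = s a"
    using exists_other_arrow_at_loop_vertex[OF assms(1,2) a assms(5)] by blast
  then show "x (a, s a) = 0"
    by (rule truncated_loop_coordinate_vanishes[OF x assms(1,4,3) a])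
qed

theorem proposition3p2:
  fixes V :: "'v set" and A :: "'a set" and s t :: "'a \<Rightarrow> 'v" and Z :: "'a list set"
  assumes "alg_closed TYPE('k::field)"
    and "quiver V A s t"
    and "minimal_relations A s t Z"
    and "finite (Bset V A s t Z)"
    and "connected_quiver V A s t"
    and "(\<not> (\<exists>a. is_loop A s t a))
       \<or> (\<forall>a m. is_loop A s t a \<and> m \<ge> 2 \<and> replicate m a \<in> Z
              \<and> Inr (replicate (m - 1) a) \<in> Bset V A s t Z \<longrightarrow> \<not> CHAR('k) dvd m)
       \<or> CHAR('k) = 0
       \<or> (\<exists>m\<ge>2. Z = paths_of_length A s t m
              \<and> \<not> (card V = 1 \<and> card A = 1 \<and> (\<forall>a\<in>A. is_loop A s t a)))
       \<or> (card V = 1 \<and> card A = 1 \<and> (\<forall>a\<in>A. is_loop A s t a)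
              \<and> (\<exists>m\<ge>2. Z = paths_of_length A s t m \<and> \<not> CHAR('k) dvd m))"
  shows "L_minus1 V A s t Z = {(\<lambda>_. 0 :: 'k)}"
proof (cases "\<exists>m\<ge>2. Z = paths_of_length A s t m
    \<and> \<not> (card V = 1 \<and> card A = 1 \<and> (\<forall>a\<in>A. is_loop A s t a))")
  case True
  then show ?thesis using L_minus1_trivial_truncated[OF assms(2,5)] by blast
next
  case False
  show ?thesis
  proof (rule L_minus1_trivial_if_char_not_dvd_loop_relations[OF assms(2-4)])
    fix a m assume "is_loop A s t a" "m \<ge> 2" "replicate m a \<in> Z"
      "Inr (replicate (m - 1) a) \<in> Bset V A s t Z"
    then show "\<not> CHAR('k) dvd m"
      using assms(6) False by (auto simp: paths_of_length_def)
  qed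
qed

end
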